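(* For every symmetric monoidal restriction category $\mathbf C$, setting $\overline{[f,E]}=[\rho_A^{-1}\circ\overline f,\,I]$ for $[f,E]\colon A\to B$ gives a well-defined restriction structure on $\mathrm{Aux}(\mathbf C)$.
   Context: A restriction category is a category equipped with an assignment to each morphism $f\colon A\to B$ of an endomorphism $\overline{f}\colon A\to A$ such that (i) $f\circ\overline f=f$; (ii) $\overline f\circ\overline g=\overline g\circ\overline f$ whenever $f,g$ have a common domain; (iii) $\overline{g\circ\overline f}=\overline g\circ\overline f$ whenever $f,g$ have a common domain; (iv) $\overline g\circ f=f\circ\overline{g\circ f}$ whenever $g\circ f$ is defined. A morphism $f$ is total if $\overline f=\mathrm{id}$. A (symmetric) monoidal restriction category is a restriction category with a (symmetric) monoidal structure such that $\overline{f\otimes g}=\overline f\otimes\overline g$. Let $\mathbf C$ be a symmetric monoidal restriction category with tensor unit $I$, associator $\alpha$, left unitor $\lambda$, right unitor $\rho$. For morphisms $f\colon A\to B\otimes E$ and $f'\colon A\to B\otimes E'$ write $f\triangleright f'$ if $\overline f=\overline{f'}$ and there is a morphism $h\colon E\to E'$ with $(\mathrm{id}_B\otimes h)\circ f=f'$. Let $\sim$ be the equivalence relation generated by $\triangleright$ (on morphisms of the form $A\to B\otimes X$ for fixed $A,B$ and varying $X$). The category $\mathrm{Aux}(\mathbf C)$ has the objects of $\mathbf C$; a morphism $A\to B$ is a $\sim$-class $[f,E]$ of a morphism $f\colon A\to B\otimes E$ of $\mathbf C$; the composite of $[f,E]\colon A\to B$ and $[g,E']\colon B\to C$ is $[\alpha\circ(g\otimes\mathrm{id}_E)\circ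 f,\;E'\otimes E]$; the identity on $A$ is $[\rho_A^{-1},I]$. *)

theory Defs
  imports Main
begin

(* A (symmetric monoidal restriction) category presented by its data:
   objects of type 'o, morphisms of type 'm. cmp g f is "g after f". *)
record ('o, 'm) smrc =
  obj  :: "'o set"
  arr  :: "'m set"
  dm   :: "'m \<Rightarrow> 'o"
  cd   :: "'m \<Rightarrow> 'o"
  cmp  :: "'m \<Rightarrow> 'm \<Rightarrow> 'm"
  idm  :: "'o \<Rightarrow> 'm"
  tns  :: "'o \<Rightarrow> 'o \<Rightarrow> 'o"
  tnsa :: "'m \<Rightarrow> 'm \<Rightarrow> 'm"
  unt  :: "'o"
  asc  :: "'o \<Rightarrow> 'o \<Rightarrow> 'o \<Rightarrow> 'm"   (* (A(x)B)(x)C -> A(x)(B(x)C) *)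
  asci :: "'o \<Rightarrow> 'o \<Rightarrow> 'o \<Rightarrow> 'm"
  lu   :: "'o \<Rightarrow> 'm"                   (* I(x)A -> A *)
  lui  :: "'o \<Rightarrow> 'm"
  ru   :: "'o \<Rightarrow> 'm"                   (* A(x)I -> A *)
  rui  :: "'o \<Rightarrow> 'm"
  sy   :: "'o \<Rightarrow> 'o \<Rightarrow> 'm"            (* A(x)B -> B(x)A *)
  rst  :: "'m \<Rightarrow> 'm"

definition hom :: "('o, 'm) smrc \<Rightarrow> 'o \<Rightarrow> 'o \<Rightarrow> 'm set" where
  "hom C A B = {f \<in> arr C. dm C f = A \<and> cd C f = B}"

definition is_category :: "('o, 'm) smrc \<Rightarrow> bool" where
  "is_category C \<longleftrightarrow>
     (\<forall>A\<in>obj C. idm C A \<in> hom C A A) \<and>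
     (\<forall>f\<in>arr C. dm C f \<in> obj C \<and> cd C f \<in> obj C) \<and>
     (\<forall>f\<in>arr C. \<forall>g\<in>arr C. cd C f = dm C g \<longrightarrow> cmp C g f \<in> hom C (dm C f) (cd C g)) \<and>
     (\<forall>f\<in>arr C. cmp C f (idm C (dm C f)) = f \<and> cmp C (idm C (cd C f)) f = f) \<and>
     (\<forall>f\<in>arr C. \<forall>g\<in>arr C. \<forall>h\<in>arr C. cd C f = dm C g \<longrightarrow> cd C g = dm C h \<longrightarrow>
        cmp C h (cmp C g f) = cmp C (cmp C h g) f)"

definition is_iso_pair :: "('o, 'm) smrc \<Rightarrow> 'o \<Rightarrow> 'o \<Rightarrow> 'm \<Rightarrow> 'm \<Rightarrow> bool" where
  "is_iso_pair C A B u v \<longleftrightarrow> u \<in> hom C A B \<and> v \<in> hom C B A \<and>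
     cmp C v u = idm C A \<and> cmp C u v = idm C B"

definition is_sym_monoidal :: "('o, 'm) smrc \<Rightarrow> bool" where
  "is_sym_monoidal C \<longleftrightarrow>
     is_category C \<and>
     unt C \<in> obj C \<and>
     (\<forall>A\<in>obj C. \<forall>B\<in>obj C. tns C A B \<in> obj C) \<and>
     \<comment> \<open>tensor is a bifunctor\<close>
     (\<forall>f\<in>arr C. \<forall>g\<in>arr C.
        tnsa C f g \<in> hom C (tns C (dm C f) (dm C g)) (tns C (cd C f) (cd C g))) \<and>
     (\<forall>A\<in>obj C. \<forall>B\<in>obj C. tnsa C (idm C A) (idm C B) = idm C (tns C A B)) \<and>
     (\<forall>f\<in>arr C. \<forall>g\<in>arr C. \<forall>f'\<in>arr C. \<forall>g'\<in>arr C.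
        cd C f = dm C g \<longrightarrow> cd C f' = dm C g' \<longrightarrow>
        tnsa C (cmp C g f) (cmp C g' f') = cmp C (tnsa C g g') (tnsa C f f')) \<and>
     \<comment> \<open>structural isomorphisms\<close>
     (\<forall>A\<in>obj C. \<forall>B\<in>obj C. \<forall>D\<in>obj C.
        is_iso_pair C (tns C (tns C A B) D) (tns C A (tns C B D)) (asc C A B D) (asci C A B D)) \<and>
     (\<forall>A\<in>obj C. is_iso_pair C (tns C (unt C) A) A (lu C A) (lui C A)) \<and>
     (\<forall>A\<in>obj C. is_iso_pair C (tns C A (unt C)) A (ru C A) (rui C A)) \<and>
     (\<forall>A\<in>obj C. \<forall>B\<in>obj C. sy C A B \<in> hom C (tns C A B) (tns C B A)) \<and>
     \<comment> \<open>naturality\<close>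
     (\<forall>f\<in>arr C. \<forall>g\<in>arr C. \<forall>h\<in>arr C.
        cmp C (asc C (cd C f) (cd C g) (cd C h)) (tnsa C (tnsa C f g) h)
        = cmp C (tnsa C f (tnsa C g h)) (asc C (dm C f) (dm C g) (dm C h))) \<and>
     (\<forall>f\<in>arr C. cmp C (lu C (cd C f)) (tnsa C (idm C (unt C)) f) = cmp C f (lu C (dm C f))) \<and>
     (\<forall>f\<in>arr C. cmp C (ru C (cd C f)) (tnsa C f (idm C (unt C))) = cmp C f (ru C (dm C f))) \<and>
     (\<forall>f\<in>arr C. \<forall>g\<in>arr C.
        cmp C (sy C (cd C f) (cd C g)) (tnsa C f g) = cmp C (tnsa C g f) (sy C (dm C f) (dm C g))) \<and>
     \<comment> \<open>coherence: triangle, pentagon, symmetry, hexagon\<close>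
     (\<forall>A\<in>obj C. \<forall>B\<in>obj C.
        cmp C (tnsa C (idm C A) (lu C B)) (asc C A (unt C) B) = tnsa C (ru C A) (idm C B)) \<and>
     (\<forall>A\<in>obj C. \<forall>B\<in>obj C. \<forall>D\<in>obj C. \<forall>E\<in>obj C.
        cmp C (asc C A B (tns C D E)) (asc C (tns C A B) D E)
        = cmp C (tnsa C (idm C A) (asc C B D E))
            (cmp C (asc C A (tns C B D) E) (tnsa C (asc C A B D) (idm C E)))) \<and>
     (\<forall>A\<in>obj C. \<forall>B\<in>obj C. cmp C (sy C B A) (sy C A B) = idm C (tns C A B)) \<and>
     (\<forall>A\<in>obj C. \<forall>B\<in>obj C. \<forall>D\<in>obj C.
        cmp C (asc C B D A) (cmp C (sy C A (tns C B D)) (asc C A B D))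
        = cmp C (tnsa C (idm C B) (sy C A D))
            (cmp C (asc C B A D) (tnsa C (sy C A B) (idm C D))))"

definition restriction_structure ::
  "'a set \<Rightarrow> ('a \<Rightarrow> 'b) \<Rightarrow> ('a \<Rightarrow> 'b) \<Rightarrow> ('a \<Rightarrow> 'a \<Rightarrow> 'a) \<Rightarrow> ('a \<Rightarrow> 'a) \<Rightarrow> bool" where
  "restriction_structure Ar d c co r \<longleftrightarrow>
     (\<forall>f\<in>Ar. r f \<in> Ar \<and> d (r f) = d f \<and> c (r f) = d f) \<and>
     (\<forall>f\<in>Ar. co f (r f) = f) \<and>
     (\<forall>f\<in>Ar. \<forall>g\<in>Ar. d f = d g \<longrightarrow> co (r f) (r g) = co (r g) (r f)) \<and>
     (\<forall>f\<in>Ar. \<forall>g\<in>Ar. d f = d g \<longrightarrow> r (co g (r f)) = co (r g) (r f)) \<and>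
     (\<forall>f\<in>Ar. \<forall>g\<in>Ar. d g = c f \<longrightarrow> co (r g) f = co f (r (co g f)))"

definition is_smrc :: "('o, 'm) smrc \<Rightarrow> bool" where
  "is_smrc C \<longleftrightarrow> is_sym_monoidal C \<and>
     restriction_structure (arr C) (dm C) (cd C) (cmp C) (rst C) \<and>
     (\<forall>f\<in>arr C. \<forall>g\<in>arr C. rst C (tnsa C f g) = tnsa C (rst C f) (rst C g))"

definition aux_tri :: "('o, 'm) smrc \<Rightarrow> 'o \<Rightarrow> 'o \<Rightarrow> 'm \<times> 'o \<Rightarrow> 'm \<times> 'o \<Rightarrow> bool" where
  "aux_tri C A B p q \<longleftrightarrow>
     snd p \<in> obj C \<and> snd q \<in> obj C \<and>
     fst p \<in> hom C A (tns C B (snd p)) \<and> fst q \<in> hom C A (tns C B (snd q)) \<and>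
     rst C (fst p) = rst C (fst q) \<and>
     (\<exists>h\<in>hom C (snd p) (snd q). cmp C (tnsa C (idm C B) h) (fst p) = fst q)"

definition aux_sim :: "('o, 'm) smrc \<Rightarrow> 'o \<Rightarrow> 'o \<Rightarrow> 'm \<times> 'o \<Rightarrow> 'm \<times> 'o \<Rightarrow> bool" where
  "aux_sim C A B = (\<lambda>p q. aux_tri C A B p q \<or> aux_tri C A B q p)\<^sup>*\<^sup>*"

definition aux_class :: "('o, 'm) smrc \<Rightarrow> 'o \<Rightarrow> 'o \<Rightarrow> 'm \<times> 'o \<Rightarrow> ('m \<times> 'o) set" where
  "aux_class C A B p = {q. aux_sim C A B p q}"

(* A morphism of Aux(C) is (A, B, [f,E]) *)
type_synonym ('o, 'm) auxm = "'o \<times> 'o \<times> ('m \<times> 'o) set"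

definition aux_arr :: "('o, 'm) smrc \<Rightarrow> ('o, 'm) auxm set" where
  "aux_arr C = {(A, B, aux_class C A B (f, E)) | A B f E.
      A \<in> obj C \<and> B \<in> obj C \<and> E \<in> obj C \<and> f \<in> hom C A (tns C B E)}"

definition aux_dom :: "('o, 'm) auxm \<Rightarrow> 'o" where
  "aux_dom x = fst x"

definition aux_cod :: "('o, 'm) auxm \<Rightarrow> 'o" where
  "aux_cod x = fst (snd x)"

definition aux_rep :: "('o, 'm) auxm \<Rightarrow> 'm \<times> 'o" where
  "aux_rep x = (SOME p. p \<in> snd (snd x))"

definition aux_comp :: "('o, 'm) smrc \<Rightarrow> ('o, 'm) auxm \<Rightarrow> ('o, 'm) auxm \<Rightarrow> ('o, 'm) auxm" where
  "aux_comp C y x =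
     (let (f, E) = aux_rep x; (g, E') = aux_rep y; A = aux_dom x; D = aux_cod y in
      (A, D, aux_class C A D
         (cmp C (asc C D E' E) (cmp C (tnsa C g (idm C E)) f), tns C E' E)))"

definition aux_id :: "('o, 'm) smrc \<Rightarrow> 'o \<Rightarrow> ('o, 'm) auxm" where
  "aux_id C A = (A, A, aux_class C A A (rui C A, unt C))"

definition aux_rst :: "('o, 'm) smrc \<Rightarrow> ('o, 'm) auxm \<Rightarrow> ('o, 'm) auxm" where
  "aux_rst C x =
     (let A = aux_dom x; f = fst (aux_rep x) in
      (A, A, aux_class C A A (cmp C (rui C A) (rst C f), unt C)))"

end

theory Submission
  imports Defs
begin

(* The restriction of [f, E] is computed on a representative, and it does not depend on the
   choice because both directions of the generating relation preserve the restriction of f.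
   Composing [u, U] with a restriction idempotent [rho^-1 o e, I] amounts to precomposing u with e:
   naturality of rho^-1 and Kelly's identity (id (x) rho) o alpha = rho identify the ancilla U (x) I
   with U.  Hence the first three restriction axioms of Aux(C) are those of C read on
   representatives, and the fourth reduces to axiom (iv) of C together with the triangle
   identity, the ancillae I (x) E and E being identified by lambda. *)

locale category =
  fixes C :: "('o, 'm) smrc"
  assumes category: "is_category C"
begin

abbreviation Ob where "Ob \<equiv> obj C"
abbreviation Ar where "Ar \<equiv> arr C"
abbreviation d where "d \<equiv> dm C"
abbreviation c where "c \<equiv> cd C"
abbreviation ide where "ide \<equiv> idm C"
abbreviation comp (infixr "\<cdot>" 55) where "g \<cdot> f \<equiv> cmp C g f"

lemma ide_in_Ar [simp]: "A \<in> Ob \<Longrightarrow> ide A \<in> Ar"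
  and d_ide [simp]: "A \<in> Ob \<Longrightarrow> d (ide A) = A"
  and c_ide [simp]: "A \<in> Ob \<Longrightarrow> c (ide A) = A"
  and d_in_Ob [simp]: "f \<in> Ar \<Longrightarrow> d f \<in> Ob"
  and c_in_Ob [simp]: "f \<in> Ar \<Longrightarrow> c f \<in> Ob"
  using category unfolding is_category_def hom_def by auto

lemma comp_in_Ar [simp]: "f \<in> Ar \<Longrightarrow> g \<in> Ar \<Longrightarrow> c f = d g \<Longrightarrow> g \<cdot> f \<in> Ar"
  and d_comp [simp]: "f \<in> Ar \<Longrightarrow> g \<in> Ar \<Longrightarrow> c f = d g \<Longrightarrow> d (g \<cdot> f) = d f"
  and c_comp [simp]: "f \<in> Ar \<Longrightarrow> g \<in> Ar \<Longrightarrow> c f = d g \<Longrightarrow> c (g \<cdot> f) = c g"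
  using category unfolding is_category_def hom_def by auto

lemma comp_ide_right [simp]: "f \<in> Ar \<Longrightarrow> A = d f \<Longrightarrow> f \<cdot> ide A = f"
  and comp_ide_left [simp]: "f \<in> Ar \<Longrightarrow> B = c f \<Longrightarrow> ide B \<cdot> f = f"
  using category unfolding is_category_def by auto

lemma comp_assoc [simp]:
  "f \<in> Ar \<Longrightarrow> g \<in> Ar \<Longrightarrow> h \<in> Ar \<Longrightarrow> c f = d g \<Longrightarrow> c g = d h \<Longrightarrow> (h \<cdot> g) \<cdot> f = h \<cdot> (g \<cdot> f)"
  using category unfolding is_category_def by metis

lemma comp_assoc_subst:
  "p \<cdot> q = s \<Longrightarrow> q \<in> Ar \<Longrightarrow> p \<in> Ar \<Longrightarrow> t \<in> Ar \<Longrightarrow> c q = d p \<Longrightarrow> c t = d q \<Longrightarrow>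
   p \<cdot> (q \<cdot> t) = s \<cdot> t"
  by (metis comp_assoc)

end

locale restriction_category = category +
  assumes restriction: "restriction_structure (arr C) (dm C) (cd C) (cmp C) (rst C)"
begin

abbreviation r where "r \<equiv> rst C"

lemma rst_in_Ar [simp]: "f \<in> Ar \<Longrightarrow> r f \<in> Ar"
  and d_rst [simp]: "f \<in> Ar \<Longrightarrow> d (r f) = d f"
  and c_rst [simp]: "f \<in> Ar \<Longrightarrow> c (r f) = d f"
  and comp_rst [simp]: "f \<in> Ar \<Longrightarrow> f \<cdot> r f = f"
  using restriction unfolding restriction_structure_def by blast+

lemma rst_comm: "f \<in> Ar \<Longrightarrow> g \<in> Ar \<Longrightarrow> d f = d g \<Longrightarrow> r f \<cdot> r g = r g \<cdot> r f"
  and rst_comp_rst: "f \<in> Ar \<Longrightarrow> g \<in> Ar \<Longrightarrow> d f = d g \<Longrightarrow> r (g \<cdot> r f) = r g \<cdot> r f"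
  and rst_comp_swap: "f \<in> Ar \<Longrightarrow> g \<in> Ar \<Longrightarrow> d g = c f \<Longrightarrow> r g \<cdot> f = f \<cdot> r (g \<cdot> f)"
  using restriction unfolding restriction_structure_def by blast+

lemma rst_ide [simp]: "A \<in> Ob \<Longrightarrow> r (ide A) = ide A"
  using comp_rst[of "ide A"] comp_ide_left[of "r (ide A)" A] by simp

lemma rst_rst [simp]: "f \<in> Ar \<Longrightarrow> r (r f) = r f"
  using rst_comp_rst[of f "ide (d f)"] by simp

lemma rst_comp_absorb:
  assumes "f \<in> Ar" "g \<in> Ar" "c f = d g"
  shows "r f \<cdot> r (g \<cdot> f) = r (g \<cdot> f)"
proof -
  have "r (g \<cdot> f) \<cdot> r f = r (g \<cdot> f)"
    using rst_comp_rst[of f "g \<cdot> f"] assms by simp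
  then show ?thesis
    using rst_comm[of f "g \<cdot> f"] assms by simp
qed

lemma rst_comp_rst_left:
  assumes "u \<in> Ar" "v \<in> Ar" "c v = d u"
  shows "r (r u \<cdot> v) = r (u \<cdot> v)"
  using rst_comp_swap[of v u] rst_comp_rst[of "u \<cdot> v" v] rst_comp_absorb[of v u] assms by simp

lemma rst_comp_total:
  assumes "k \<in> Ar" "m \<in> Ar" "c m = d k" "r k = ide (d k)"
  shows "r (k \<cdot> m) = r m"
  using rst_comp_rst_left[OF assms(1-3)] assms by simp

lemma rst_left_absorbed:
  assumes "f \<in> Ar" "k \<in> Ar" "c f = d k" "r (k \<cdot> f) = r f"
  shows "r k \<cdot> f = f"
  using rst_comp_swap[of f k] assms by simp

lemma rst_section:
  assumes "u \<in> Ar" "v \<in> Ar" "c u = d v" "v \<cdot> u = ide (d u)"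
  shows "r u = ide (d u)"
proof -
  have "r u = ide (d u) \<cdot> r u" using assms by simp
  also have "\<dots> = (v \<cdot> u) \<cdot> r u" using assms by simp
  also have "\<dots> = v \<cdot> u" using assms(1-3) by simp
  also have "\<dots> = ide (d u)" by (rule assms(4))
  finally show ?thesis .
qed

end

locale sym_monoidal_category = category +
  assumes sym_monoidal: "is_sym_monoidal C"
begin

abbreviation I where "I \<equiv> unt C"
abbreviation tensor_ob (infixr "\<odot>" 60) where "A \<odot> B \<equiv> tns C A B"
abbreviation tensor (infixr "\<otimes>" 60) where "f \<otimes> g \<equiv> tnsa C f g"
abbreviation assoc where "assoc \<equiv> asc C"
abbreviation assoc_inv where "assoc_inv \<equiv> asci C"
abbreviation lunit where "lunit \<equiv> lu C"
abbreviation lunit_inv where "lunit_inv \<equiv> lui C"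
abbreviation runit where "runit \<equiv> ru C"
abbreviation runit_inv where "runit_inv \<equiv> rui C"

lemma unit_in_Ob [simp]: "I \<in> Ob"
  and tensor_in_Ob [simp]: "A \<in> Ob \<Longrightarrow> B \<in> Ob \<Longrightarrow> A \<odot> B \<in> Ob"
  and tensor_in_Ar [simp]: "f \<in> Ar \<Longrightarrow> g \<in> Ar \<Longrightarrow> f \<otimes> g \<in> Ar"
  and d_tensor [simp]: "f \<in> Ar \<Longrightarrow> g \<in> Ar \<Longrightarrow> d (f \<otimes> g) = d f \<odot> d g"
  and c_tensor [simp]: "f \<in> Ar \<Longrightarrow> g \<in> Ar \<Longrightarrow> c (f \<otimes> g) = c f \<odot> c g"
  and tensor_ide [simp]: "A \<in> Ob \<Longrightarrow> B \<in> Ob \<Longrightarrow> ide A \<otimes> ide B = ide (A \<odot> B)"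
  using sym_monoidal unfolding is_sym_monoidal_def hom_def by auto

lemma interchange:
  "f \<in> Ar \<Longrightarrow> g \<in> Ar \<Longrightarrow> f' \<in> Ar \<Longrightarrow> g' \<in> Ar \<Longrightarrow> c f = d g \<Longrightarrow> c f' = d g' \<Longrightarrow>
   (g \<otimes> g') \<cdot> (f \<otimes> f') = (g \<cdot> f) \<otimes> (g' \<cdot> f')"
  using sym_monoidal unfolding is_sym_monoidal_def by auto

lemma assoc_in_Ar [simp]: "A \<in> Ob \<Longrightarrow> B \<in> Ob \<Longrightarrow> D \<in> Ob \<Longrightarrow> assoc A B D \<in> Ar"
  and d_assoc [simp]: "A \<in> Ob \<Longrightarrow> B \<in> Ob \<Longrightarrow> D \<in> Ob \<Longrightarrow> d (assoc A B D) = (A \<odot> B) \<odot> D"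
  and c_assoc [simp]: "A \<in> Ob \<Longrightarrow> B \<in> Ob \<Longrightarrow> D \<in> Ob \<Longrightarrow> c (assoc A B D) = A \<odot> B \<odot> D"
  and assoc_inv_in_Ar [simp]: "A \<in> Ob \<Longrightarrow> B \<in> Ob \<Longrightarrow> D \<in> Ob \<Longrightarrow> assoc_inv A B D \<in> Ar"
  and d_assoc_inv [simp]: "A \<in> Ob \<Longrightarrow> B \<in> Ob \<Longrightarrow> D \<in> Ob \<Longrightarrow> d (assoc_inv A B D) = A \<odot> B \<odot> D"
  and c_assoc_inv [simp]: "A \<in> Ob \<Longrightarrow> B \<in> Ob \<Longrightarrow> D \<in> Ob \<Longrightarrow> c (assoc_inv A B D) = (A \<odot> B) \<odot> D"
  and assoc_inv_assoc:
    "A \<in> Ob \<Longrightarrow> B \<in> Ob \<Longrightarrow> D \<in> Ob \<Longrightarrow> assoc_inv A B D \<cdot> assoc A B D = ide ((A \<odot> B) \<odot> D)"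
  using sym_monoidal unfolding is_sym_monoidal_def is_iso_pair_def hom_def by auto

lemma lunit_in_Ar [simp]: "A \<in> Ob \<Longrightarrow> lunit A \<in> Ar"
  and d_lunit [simp]: "A \<in> Ob \<Longrightarrow> d (lunit A) = I \<odot> A"
  and c_lunit [simp]: "A \<in> Ob \<Longrightarrow> c (lunit A) = A"
  and lunit_inv_in_Ar [simp]: "A \<in> Ob \<Longrightarrow> lunit_inv A \<in> Ar"
  and d_lunit_inv [simp]: "A \<in> Ob \<Longrightarrow> d (lunit_inv A) = A"
  and c_lunit_inv [simp]: "A \<in> Ob \<Longrightarrow> c (lunit_inv A) = I \<odot> A"
  and lunit_inv_lunit: "A \<in> Ob \<Longrightarrow> lunit_inv A \<cdot> lunit A = ide (I \<odot> A)"
  using sym_monoidal unfolding is_sym_monoidal_def is_iso_pair_def hom_def by auto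

lemma runit_in_Ar [simp]: "A \<in> Ob \<Longrightarrow> runit A \<in> Ar"
  and d_runit [simp]: "A \<in> Ob \<Longrightarrow> d (runit A) = A \<odot> I"
  and c_runit [simp]: "A \<in> Ob \<Longrightarrow> c (runit A) = A"
  and runit_inv_in_Ar [simp]: "A \<in> Ob \<Longrightarrow> runit_inv A \<in> Ar"
  and d_runit_inv [simp]: "A \<in> Ob \<Longrightarrow> d (runit_inv A) = A"
  and c_runit_inv [simp]: "A \<in> Ob \<Longrightarrow> c (runit_inv A) = A \<odot> I"
  and runit_inv_runit: "A \<in> Ob \<Longrightarrow> runit_inv A \<cdot> runit A = ide (A \<odot> I)"
  and runit_runit_inv: "A \<in> Ob \<Longrightarrow> runit A \<cdot> runit_inv A = ide A"
  using sym_monoidal unfolding is_sym_monoidal_def is_iso_pair_def hom_def by auto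

lemma assoc_naturality:
  "f \<in> Ar \<Longrightarrow> g \<in> Ar \<Longrightarrow> h \<in> Ar \<Longrightarrow>
   assoc (c f) (c g) (c h) \<cdot> ((f \<otimes> g) \<otimes> h) = (f \<otimes> g \<otimes> h) \<cdot> assoc (d f) (d g) (d h)"
  and runit_naturality: "f \<in> Ar \<Longrightarrow> runit (c f) \<cdot> (f \<otimes> ide I) = f \<cdot> runit (d f)"
  and triangle: "A \<in> Ob \<Longrightarrow> B \<in> Ob \<Longrightarrow> (ide A \<otimes> lunit B) \<cdot> assoc A I B = runit A \<otimes> ide B"
  and pentagon: "A \<in> Ob \<Longrightarrow> B \<in> Ob \<Longrightarrow> D \<in> Ob \<Longrightarrow> E \<in> Ob \<Longrightarrow>
    assoc A B (D \<odot> E) \<cdot> assoc (A \<odot> B) D E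
    = (ide A \<otimes> assoc B D E) \<cdot> (assoc A (B \<odot> D) E \<cdot> (assoc A B D \<otimes> ide E))"
  using sym_monoidal unfolding is_sym_monoidal_def by auto

lemma tensor_ide_comm:
  "g \<in> Ar \<Longrightarrow> h \<in> Ar \<Longrightarrow> (ide (c g) \<otimes> h) \<cdot> (g \<otimes> ide (d h)) = (g \<otimes> ide (c h)) \<cdot> (ide (d g) \<otimes> h)"
  using interchange[of g "ide (c g)" "ide (d h)" h] interchange[of "ide (d g)" g h "ide (c h)"] by simp

lemma runit_inv_naturality: "u \<in> Ar \<Longrightarrow> (u \<otimes> ide I) \<cdot> runit_inv (d u) = runit_inv (c u) \<cdot> u"
proof -
  assume u: "u \<in> Ar"
  have "(u \<otimes> ide I) \<cdot> runit_inv (d u)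
      = (runit_inv (c u) \<cdot> runit (c u)) \<cdot> ((u \<otimes> ide I) \<cdot> runit_inv (d u))"
    using u runit_inv_runit by simp
  also have "\<dots> = runit_inv (c u) \<cdot> ((runit (c u) \<cdot> (u \<otimes> ide I)) \<cdot> runit_inv (d u))"
    using u by simp
  also have "\<dots> = runit_inv (c u) \<cdot> ((u \<cdot> runit (d u)) \<cdot> runit_inv (d u))"
    by (simp only: runit_naturality[OF u])
  also have "\<dots> = runit_inv (c u) \<cdot> u" using u runit_runit_inv by simp
  finally show ?thesis .
qed

lemma tensor_unit_cancel:
  assumes "u \<in> Ar" "v \<in> Ar" "d u = d v" "c u = c v" "u \<otimes> ide I = v \<otimes> ide I"
  shows "u = v"
proof -
  have "u = (runit (c u) \<cdot> (u \<otimes> ide I)) \<cdot> runit_inv (d u)"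
    using runit_naturality[OF assms(1)] runit_runit_inv assms by simp
  also have "\<dots> = (runit (c v) \<cdot> (v \<otimes> ide I)) \<cdot> runit_inv (d v)" using assms by simp
  also have "\<dots> = v" using runit_naturality[OF assms(2)] runit_runit_inv assms by simp
  finally show ?thesis .
qed

(* Kelly's lemma: after tensoring with I on the right it follows from the pentagon and the
   triangle, and tensoring with I is faithful by tensor_unit_cancel. *)
lemma runit_tensor:
  assumes X: "X \<in> Ob" and Y: "Y \<in> Ob"
  shows "(ide X \<otimes> runit Y) \<cdot> assoc X Y I = runit (X \<odot> Y)"
proof -
  define K where "K = (ide X \<otimes> runit Y) \<cdot> assoc X Y I"
  define M where "M = ide X \<otimes> ide Y \<otimes> lunit I"
  have M_assoc: "M \<cdot> (ide X \<otimes> assoc Y I I) = ide X \<otimes> runit Y \<otimes> ide I"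
    using interchange[of "ide X" "ide X" "assoc Y I I" "ide Y \<otimes> lunit I"] triangle[of Y I] X Y
    unfolding M_def by simp
  have "assoc X Y I \<cdot> (runit (X \<odot> Y) \<otimes> ide I)
      = assoc X Y I \<cdot> ((ide (X \<odot> Y) \<otimes> lunit I) \<cdot> assoc (X \<odot> Y) I I)"
    using triangle[of "X \<odot> Y" I] X Y by simp
  also have "\<dots> = M \<cdot> (assoc X Y (I \<odot> I) \<cdot> assoc (X \<odot> Y) I I)"
    using comp_assoc_subst[OF assoc_naturality[of "ide X" "ide Y" "lunit I"]] X Y
    unfolding M_def by simp
  also have "\<dots> = M \<cdot> ((ide X \<otimes> assoc Y I I) \<cdot> (assoc X (Y \<odot> I) I \<cdot> (assoc X Y I \<otimes> ide I)))"
    using pentagon X Y by simp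
  also have "\<dots> = (ide X \<otimes> runit Y \<otimes> ide I) \<cdot> (assoc X (Y \<odot> I) I \<cdot> (assoc X Y I \<otimes> ide I))"
    using comp_assoc_subst[OF M_assoc] X Y unfolding M_def by simp
  also have "\<dots> = assoc X Y I \<cdot> (((ide X \<otimes> runit Y) \<otimes> ide I) \<cdot> (assoc X Y I \<otimes> ide I))"
    using comp_assoc_subst[OF assoc_naturality[of "ide X" "runit Y" "ide I", symmetric]] X Y
    by simp
  also have "\<dots> = assoc X Y I \<cdot> (K \<otimes> ide I)"
    using interchange[of "assoc X Y I" "ide X \<otimes> runit Y" "ide I" "ide I"] X Y unfolding K_def by simp
  finally have "assoc X Y I \<cdot> (runit (X \<odot> Y) \<otimes> ide I) = assoc X Y I \<cdot> (K \<otimes> ide I)" .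
  then have "assoc_inv X Y I \<cdot> (assoc X Y I \<cdot> (runit (X \<odot> Y) \<otimes> ide I))
      = assoc_inv X Y I \<cdot> (assoc X Y I \<cdot> (K \<otimes> ide I))"
    by simp
  then have "runit (X \<odot> Y) \<otimes> ide I = K \<otimes> ide I"
    using X Y unfolding K_def by (simp add: comp_assoc_subst[OF assoc_inv_assoc[of X Y I]])
  then show ?thesis
    using tensor_unit_cancel[of K "runit (X \<odot> Y)"] X Y unfolding K_def by simp
qed

end

locale sm_restriction_category = restriction_category + sym_monoidal_category +
  assumes rst_tensor [simp]: "f \<in> arr C \<Longrightarrow> g \<in> arr C \<Longrightarrow> rst C (tnsa C f g) = tnsa C (rst C f) (rst C g)"

lemma sm_restriction_categoryI:
  assumes "is_smrc C"
  shows "sm_restriction_category C"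
proof
  show "is_category C" using assms unfolding is_smrc_def is_sym_monoidal_def by blast
qed (use assms in \<open>auto simp: is_smrc_def\<close>)

context sm_restriction_category
begin

lemma rst_assoc [simp]: "A \<in> Ob \<Longrightarrow> B \<in> Ob \<Longrightarrow> D \<in> Ob \<Longrightarrow> r (assoc A B D) = ide ((A \<odot> B) \<odot> D)"
  using rst_section[of "assoc A B D" "assoc_inv A B D"] assoc_inv_assoc by simp

lemma rst_lunit [simp]: "A \<in> Ob \<Longrightarrow> r (lunit A) = ide (I \<odot> A)"
  using rst_section[of "lunit A" "lunit_inv A"] lunit_inv_lunit by simp

lemma rst_runit [simp]: "A \<in> Ob \<Longrightarrow> r (runit A) = ide (A \<odot> I)"
  using rst_section[of "runit A" "runit_inv A"] runit_inv_runit by simp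

lemma rst_runit_inv [simp]: "A \<in> Ob \<Longrightarrow> r (runit_inv A) = ide A"
  using rst_section[of "runit_inv A" "runit A"] runit_runit_inv by simp

end

lemma rtranclp_map:
  assumes "\<And>x y. R x y \<Longrightarrow> S (F x) (F y)" "R\<^sup>*\<^sup>* x y"
  shows "S\<^sup>*\<^sup>* (F x) (F y)"
  using assms(2) by induction (auto intro: rtranclp.rtrancl_into_rtrancl assms(1))

context sm_restriction_category
begin

definition aux_pair where
  "aux_pair A B p \<longleftrightarrow> snd p \<in> Ob \<and> fst p \<in> Ar \<and> d (fst p) = A \<and> c (fst p) = B \<odot> snd p"

lemma aux_pair_iff [simp]: "aux_pair A B (f, E) \<longleftrightarrow> E \<in> Ob \<and> f \<in> Ar \<and> d f = A \<and> c f = B \<odot> E"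
  unfolding aux_pair_def by simp

lemma aux_tri_aux_pair:
  "aux_tri C A B p q \<Longrightarrow> aux_pair A B p \<and> aux_pair A B q \<and> r (fst p) = r (fst q)"
  unfolding aux_tri_def aux_pair_def hom_def by auto

lemma aux_triI:
  assumes "aux_pair A B (f, E)" "aux_pair A B (f', E')" "h \<in> Ar" "d h = E" "c h = E'"
    and "(ide B \<otimes> h) \<cdot> f = f'" "r f = r f'"
  shows "aux_tri C A B (f, E) (f', E')"
  using assms unfolding aux_tri_def hom_def by auto

lemma aux_triE:
  assumes "aux_tri C A B (f, E) (f', E')"
  obtains h where "aux_pair A B (f, E)" "aux_pair A B (f', E')" "h \<in> Ar" "d h = E" "c h = E'"
    and "(ide B \<otimes> h) \<cdot> f = f'" "r f = r f'"
  using assms unfolding aux_tri_def hom_def by auto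

lemma aux_tri_total:
  assumes "B \<in> Ob" "aux_pair A B (f, E)" "k \<in> Ar" "d k = E" "c k = E'" "r k = ide E"
    and "(ide B \<otimes> k) \<cdot> f = f'"
  shows "aux_tri C A B (f, E) (f', E')"
proof (rule aux_triI[OF assms(2) _ assms(3-5,7)])
  show "aux_pair A B (f', E')" using assms by auto
  show "r f = r f'"
    using rst_comp_total[of "ide B \<otimes> k" f] assms by auto
qed

lemma equivp_aux_sim: "equivp (aux_sim C A B)"
  unfolding aux_sim_def by (rule equivp_rtranclp) (auto intro: sympI)

lemma aux_tri_imp_aux_sim: "aux_tri C A B p q \<Longrightarrow> aux_sim C A B p q"
  unfolding aux_sim_def by (rule r_into_rtranclp) simp

lemma aux_class_eqI: "aux_sim C A B p q \<Longrightarrow> aux_class C A B p = aux_class C A B q"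
  using equivp_aux_sim unfolding aux_class_def by (metis equivp_def)

lemma aux_sim_aux_pair:
  assumes "aux_sim C A B p q" "aux_pair A B p"
  shows "aux_pair A B q \<and> r (fst q) = r (fst p)"
  using assms unfolding aux_sim_def
  by (induction rule: rtranclp_induct) (use aux_tri_aux_pair in metis)+

lemma aux_rep_sim: "aux_sim C A B p (aux_rep (A, B, aux_class C A B p))"
proof -
  have "p \<in> aux_class C A B p"
    using equivp_aux_sim unfolding aux_class_def by (simp add: equivp_reflp)
  then have "aux_rep (A, B, aux_class C A B p) \<in> aux_class C A B p"
    unfolding aux_rep_def by (metis someI snd_conv)
  then show ?thesis unfolding aux_class_def by simp
qed

definition aux_pair_comp where
  "aux_pair_comp D q p = (assoc D (snd q) (snd p) \<cdot> ((fst q \<otimes> ide (snd p)) \<cdot> fst p), snd q \<odot> snd p)"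

lemma aux_pair_comp_Pair [simp]:
  "aux_pair_comp D (g, G) (f, E) = (assoc D G E \<cdot> ((g \<otimes> ide E) \<cdot> f), G \<odot> E)"
  unfolding aux_pair_comp_def by simp

lemma aux_tri_aux_pair_comp_right:
  assumes B: "B \<in> Ob" and D: "D \<in> Ob" and tri: "aux_tri C A B (f, E) (f', E')"
    and g: "aux_pair B D (g, G)"
  shows "aux_tri C A D (aux_pair_comp D (g, G) (f, E)) (aux_pair_comp D (g, G) (f', E'))"
proof -
  obtain h where f: "aux_pair A B (f, E)" and f': "aux_pair A B (f', E')"
    and h: "h \<in> Ar" "d h = E" "c h = E'" and fh: "(ide B \<otimes> h) \<cdot> f = f'" and rf: "r f = r f'"
    using tri by (rule aux_triE)
  note facts = B D f f' g h
  have swap: "(ide (D \<odot> G) \<otimes> h) \<cdot> (g \<otimes> ide E) = (g \<otimes> ide E') \<cdot> (ide B \<otimes> h)"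
    using tensor_ide_comm[of g h] facts by simp
  have "(ide D \<otimes> ide G \<otimes> h) \<cdot> (assoc D G E \<cdot> ((g \<otimes> ide E) \<cdot> f))
      = (assoc D G E' \<cdot> ((ide D \<otimes> ide G) \<otimes> h)) \<cdot> ((g \<otimes> ide E) \<cdot> f)"
    using assoc_naturality[of "ide D" "ide G" h] facts by simp
  also have "\<dots> = assoc D G E' \<cdot> (((ide (D \<odot> G) \<otimes> h) \<cdot> (g \<otimes> ide E)) \<cdot> f)"
    using facts by simp
  also have "\<dots> = assoc D G E' \<cdot> ((g \<otimes> ide E') \<cdot> f')"
    using swap fh facts by simp
  finally have comp_eq: "(ide D \<otimes> ide G \<otimes> h) \<cdot> (assoc D G E \<cdot> ((g \<otimes> ide E) \<cdot> f))
      = assoc D G E' \<cdot> ((g \<otimes> ide E') \<cdot> f')" .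
  have rst_h_absorbed: "(ide B \<otimes> r h) \<cdot> f = f"
    using rst_left_absorbed[of f "ide B \<otimes> h"] fh rf facts by simp
  have "r (assoc D G E' \<cdot> ((g \<otimes> ide E') \<cdot> f')) = r ((g \<otimes> ide E') \<cdot> f')"
    using facts by (intro rst_comp_total) auto
  also have "\<dots> = r ((ide (D \<odot> G) \<otimes> h) \<cdot> ((g \<otimes> ide E) \<cdot> f))"
    using comp_assoc_subst[OF swap[symmetric], of f] fh facts by simp
  also have "\<dots> = r ((ide (D \<odot> G) \<otimes> r h) \<cdot> ((g \<otimes> ide E) \<cdot> f))"
    using rst_comp_rst_left[of "ide (D \<odot> G) \<otimes> h" "(g \<otimes> ide E) \<cdot> f"] facts by simp
  also have "\<dots> = r ((g \<otimes> ide E) \<cdot> ((ide B \<otimes> r h) \<cdot> f))"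
    using tensor_ide_comm[of g "r h"] facts by (simp flip: comp_assoc)
  also have "\<dots> = r (assoc D G E \<cdot> ((g \<otimes> ide E) \<cdot> f))"
    using rst_h_absorbed facts by (simp add: rst_comp_total)
  finally have rst_eq: "r (assoc D G E \<cdot> ((g \<otimes> ide E) \<cdot> f)) = r (assoc D G E' \<cdot> ((g \<otimes> ide E') \<cdot> f'))"
    by simp
  show ?thesis
    using aux_triI[OF _ _ _ _ _ comp_eq rst_eq] facts by simp
qed

lemma aux_tri_aux_pair_comp_left:
  assumes B: "B \<in> Ob" and D: "D \<in> Ob" and tri: "aux_tri C B D (g, G) (g', G')"
    and f: "aux_pair A B (f, E)"
  shows "aux_tri C A D (aux_pair_comp D (g, G) (f, E)) (aux_pair_comp D (g', G') (f, E))"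
proof -
  obtain k where g: "aux_pair B D (g, G)" and g': "aux_pair B D (g', G')"
    and k: "k \<in> Ar" "d k = G" "c k = G'" and gk: "(ide D \<otimes> k) \<cdot> g = g'" and rg: "r g = r g'"
    using tri by (rule aux_triE)
  note facts = B D f g g' k
  have "(ide D \<otimes> k \<otimes> ide E) \<cdot> (assoc D G E \<cdot> ((g \<otimes> ide E) \<cdot> f))
      = (assoc D G' E \<cdot> ((ide D \<otimes> k) \<otimes> ide E)) \<cdot> ((g \<otimes> ide E) \<cdot> f)"
    using assoc_naturality[of "ide D" k "ide E"] facts by simp
  also have "\<dots> = assoc D G' E \<cdot> ((((ide D \<otimes> k) \<otimes> ide E) \<cdot> (g \<otimes> ide E)) \<cdot> f)"
    using facts by simp
  also have "\<dots> = assoc D G' E \<cdot> ((g' \<otimes> ide E) \<cdot> f)"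
    using interchange[of g "ide D \<otimes> k" "ide E" "ide E"] gk facts by simp
  finally have comp_eq: "(ide D \<otimes> k \<otimes> ide E) \<cdot> (assoc D G E \<cdot> ((g \<otimes> ide E) \<cdot> f))
      = assoc D G' E \<cdot> ((g' \<otimes> ide E) \<cdot> f)" .
  have "r (assoc D G E \<cdot> ((g \<otimes> ide E) \<cdot> f)) = r (r (g \<otimes> ide E) \<cdot> f)"
    using rst_comp_rst_left[of "g \<otimes> ide E" f] facts by (simp add: rst_comp_total)
  also have "\<dots> = r (assoc D G' E \<cdot> ((g' \<otimes> ide E) \<cdot> f))"
    using rst_comp_rst_left[of "g' \<otimes> ide E" f] rg facts by (simp add: rst_comp_total)
  finally have rst_eq: "r (assoc D G E \<cdot> ((g \<otimes> ide E) \<cdot> f)) = r (assoc D G' E \<cdot> ((g' \<otimes> ide E) \<cdot> f))" .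
  show ?thesis
    using aux_triI[OF _ _ _ _ _ comp_eq rst_eq] facts by simp
qed

lemma aux_sim_aux_pair_comp_right:
  assumes B: "B \<in> Ob" and D: "D \<in> Ob" and sim: "aux_sim C A B p p'" and q: "aux_pair B D q"
  shows "aux_sim C A D (aux_pair_comp D q p) (aux_pair_comp D q p')"
proof -
  obtain g G where q_eq: "q = (g, G)" by fastforce
  have step: "aux_tri C A D (aux_pair_comp D q x) (aux_pair_comp D q y)" if "aux_tri C A B x y" for x y
    using that aux_tri_aux_pair_comp_right[OF B D _ q[unfolded q_eq]] unfolding q_eq
    by (cases x, cases y) simp
  show ?thesis
    using sim unfolding aux_sim_def
    by (rule rtranclp_map[where F = "aux_pair_comp D q", rotated]) (use step in blast)
qed

lemma aux_sim_aux_pair_comp_left: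
  assumes B: "B \<in> Ob" and D: "D \<in> Ob" and sim: "aux_sim C B D q q'" and p: "aux_pair A B p"
  shows "aux_sim C A D (aux_pair_comp D q p) (aux_pair_comp D q' p)"
proof -
  obtain f E where p_eq: "p = (f, E)" by fastforce
  have step: "aux_tri C A D (aux_pair_comp D x p) (aux_pair_comp D y p)" if "aux_tri C B D x y" for x y
    using that aux_tri_aux_pair_comp_left[OF B D _ p[unfolded p_eq]] unfolding p_eq
    by (cases x, cases y) simp
  show ?thesis
    using sim unfolding aux_sim_def
    by (rule rtranclp_map[where F = "\<lambda>q. aux_pair_comp D q p", rotated]) (use step in blast)
qed

lemma aux_comp_aux_class:
  assumes A: "A \<in> Ob" and B: "B \<in> Ob" and D: "D \<in> Ob" and p: "aux_pair A B p" and q: "aux_pair B D q"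
  shows "aux_comp C (B, D, aux_class C B D q) (A, B, aux_class C A B p)
    = (A, D, aux_class C A D (aux_pair_comp D q p))"
proof -
  define p0 where "p0 = aux_rep (A, B, aux_class C A B p)"
  define q0 where "q0 = aux_rep (B, D, aux_class C B D q)"
  have p_p0: "aux_sim C A B p p0" and q_q0: "aux_sim C B D q q0"
    unfolding p0_def q0_def by (rule aux_rep_sim)+
  have "aux_comp C (B, D, aux_class C B D q) (A, B, aux_class C A B p)
      = (A, D, aux_class C A D (aux_pair_comp D q0 p0))"
    unfolding aux_comp_def aux_pair_comp_def aux_dom_def aux_cod_def p0_def[symmetric] q0_def[symmetric]
    by (simp add: Let_def split: prod.split)
  also have "aux_class C A D (aux_pair_comp D q0 p0) = aux_class C A D (aux_pair_comp D q p)"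
  proof -
    have "aux_sim C A D (aux_pair_comp D q p) (aux_pair_comp D q p0)"
      by (rule aux_sim_aux_pair_comp_right[OF B D p_p0 q])
    moreover have "aux_sim C A D (aux_pair_comp D q p0) (aux_pair_comp D q0 p0)"
      using aux_sim_aux_pair_comp_left[OF B D q_q0] aux_sim_aux_pair[OF p_p0 p] by blast
    ultimately show ?thesis
      using aux_class_eqI equivp_aux_sim by (metis equivp_transp)
  qed
  finally show ?thesis .
qed

lemma aux_rst_aux_class:
  assumes "aux_pair A B p"
  shows "aux_rst C (A, B, aux_class C A B p) = (A, A, aux_class C A A (runit_inv A \<cdot> r (fst p), I))"
proof -
  define p0 where "p0 = aux_rep (A, B, aux_class C A B p)"
  have "r (fst p0) = r (fst p)"
    using aux_sim_aux_pair[OF _ assms] aux_rep_sim unfolding p0_def by blast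
  then show ?thesis unfolding aux_rst_def aux_dom_def p0_def[symmetric] by (simp add: Let_def)
qed

lemma aux_arrI: "A \<in> Ob \<Longrightarrow> B \<in> Ob \<Longrightarrow> aux_pair A B p \<Longrightarrow> (A, B, aux_class C A B p) \<in> aux_arr C"
  unfolding aux_arr_def aux_pair_def hom_def by (cases p) auto

lemma aux_arrE:
  assumes "x \<in> aux_arr C"
  obtains A B f E where "x = (A, B, aux_class C A B (f, E))" "A \<in> Ob" "B \<in> Ob" "aux_pair A B (f, E)"
  using assms unfolding aux_arr_def hom_def by auto

lemma aux_class_runit_inv:
  assumes B: "B \<in> Ob" and w: "aux_pair A B (w, U)"
  shows "aux_class C A B (assoc B U I \<cdot> (runit_inv (B \<odot> U) \<cdot> w), U \<odot> I) = aux_class C A B (w, U)"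
proof (intro aux_class_eqI aux_tri_imp_aux_sim aux_tri_total[of _ _ _ _ "runit U"])
  have "(ide B \<otimes> runit U) \<cdot> (assoc B U I \<cdot> (runit_inv (B \<odot> U) \<cdot> w))
      = ((ide B \<otimes> runit U) \<cdot> assoc B U I) \<cdot> (runit_inv (B \<odot> U) \<cdot> w)"
    using B w by simp
  also have "\<dots> = (runit (B \<odot> U) \<cdot> runit_inv (B \<odot> U)) \<cdot> w"
    using runit_tensor B w by simp
  also have "\<dots> = w" using runit_runit_inv B w by simp
  finally show "(ide B \<otimes> runit U) \<cdot> (assoc B U I \<cdot> (runit_inv (B \<odot> U) \<cdot> w)) = w" .
qed (use B w in simp_all)

lemma aux_class_aux_pair_comp_runit_inv:
  assumes A: "A \<in> Ob" and B: "B \<in> Ob" and u: "aux_pair A B (u, U)"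
    and e: "e \<in> Ar" "d e = A" "c e = A"
  shows "aux_class C A B (aux_pair_comp B (u, U) (runit_inv A \<cdot> e, I)) = aux_class C A B (u \<cdot> e, U)"
proof -
  have "(u \<otimes> ide I) \<cdot> (runit_inv A \<cdot> e) = ((u \<otimes> ide I) \<cdot> runit_inv A) \<cdot> e"
    using A u e by simp
  also have "\<dots> = runit_inv (B \<odot> U) \<cdot> (u \<cdot> e)"
    using runit_inv_naturality[of u] A B u e by simp
  finally show ?thesis
    using aux_class_runit_inv[OF B, of A "u \<cdot> e" U] u e by simp
qed

lemma aux_comp_aux_rst:
  assumes A: "A \<in> Ob" and B: "B \<in> Ob" and u: "aux_pair A B (u, U)" and f: "f \<in> Ar" "d f = A"
  shows "aux_comp C (A, B, aux_class C A B (u, U)) (A, A, aux_class C A A (runit_inv A \<cdot> r f, I))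
    = (A, B, aux_class C A B (u \<cdot> r f, U))"
  using aux_comp_aux_class[OF A A B _ u, of "(runit_inv A \<cdot> r f, I)"]
    aux_class_aux_pair_comp_runit_inv[OF A B u, of "r f"] A f by simp

lemma aux_class_aux_pair_comp_rst:
  assumes B: "B \<in> Ob" and D: "D \<in> Ob" and f: "aux_pair A B (f, E)" and g: "aux_pair B D (g, G)"
  shows "aux_class C A B (aux_pair_comp B (runit_inv B \<cdot> r g, I) (f, E))
    = aux_class C A B (f \<cdot> r (assoc D G E \<cdot> ((g \<otimes> ide E) \<cdot> f)), E)"
proof -
  note facts = B D f g
  have "(ide B \<otimes> lunit E) \<cdot> (assoc B I E \<cdot> (((runit_inv B \<cdot> r g) \<otimes> ide E) \<cdot> f))
      = ((ide B \<otimes> lunit E) \<cdot> assoc B I E) \<cdot> (((runit_inv B \<cdot> r g) \<otimes> ide E) \<cdot> f)"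
    using facts by simp
  also have "\<dots> = ((runit B \<otimes> ide E) \<cdot> ((runit_inv B \<cdot> r g) \<otimes> ide E)) \<cdot> f"
    using triangle facts by simp
  also have "\<dots> = (r g \<otimes> ide E) \<cdot> f"
    using interchange[of "runit_inv B \<cdot> r g" "runit B" "ide E" "ide E"]
      comp_assoc_subst[OF runit_runit_inv[OF B], of "r g"] facts by simp
  also have "\<dots> = f \<cdot> r (assoc D G E \<cdot> ((g \<otimes> ide E) \<cdot> f))"
    using rst_comp_swap[of f "g \<otimes> ide E"] facts by (simp add: rst_comp_total)
  finally have comp_eq: "(ide B \<otimes> lunit E) \<cdot> (assoc B I E \<cdot> (((runit_inv B \<cdot> r g) \<otimes> ide E) \<cdot> f))
      = f \<cdot> r (assoc D G E \<cdot> ((g \<otimes> ide E) \<cdot> f))" .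
  show ?thesis
    unfolding aux_pair_comp_Pair
    by (intro aux_class_eqI aux_tri_imp_aux_sim aux_tri_total[of _ _ _ _ "lunit E"])
      (use facts comp_eq in simp_all)
qed

lemma aux_rst_rst_comm:
  assumes A: "A \<in> Ob" and f: "aux_pair A B (f, E)" and g: "aux_pair A B' (g, G)"
  defines "x \<equiv> (A, B, aux_class C A B (f, E))" and "y \<equiv> (A, B', aux_class C A B' (g, G))"
  shows "aux_comp C (aux_rst C x) (aux_rst C y) = aux_comp C (aux_rst C y) (aux_rst C x)"
  unfolding x_def y_def aux_rst_aux_class[OF f] aux_rst_aux_class[OF g]
  using aux_comp_aux_rst[OF A A, of "runit_inv A \<cdot> r f" I g]
    aux_comp_aux_rst[OF A A, of "runit_inv A \<cdot> r g" I f] rst_comm[of f g] A f g by simp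

lemma aux_rst_comp_rst:
  assumes A: "A \<in> Ob" and B': "B' \<in> Ob" and f: "aux_pair A B (f, E)" and g: "aux_pair A B' (g, G)"
  defines "x \<equiv> (A, B, aux_class C A B (f, E))" and "y \<equiv> (A, B', aux_class C A B' (g, G))"
  shows "aux_rst C (aux_comp C y (aux_rst C x)) = aux_comp C (aux_rst C y) (aux_rst C x)"
proof -
  have "aux_comp C y (aux_rst C x) = (A, B', aux_class C A B' (g \<cdot> r f, G))"
    unfolding x_def y_def aux_rst_aux_class[OF f] using aux_comp_aux_rst[OF A B' g] f by simp
  then show ?thesis
    unfolding x_def y_def aux_rst_aux_class[OF f] aux_rst_aux_class[OF g]
    using aux_rst_aux_class[of A B' "(g \<cdot> r f, G)"] aux_comp_aux_rst[OF A A, of "runit_inv A \<cdot> r g" I f]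
      rst_comp_rst[of f g] A f g by simp
qed

lemma aux_rst_comp_swap:
  assumes A: "A \<in> Ob" and B: "B \<in> Ob" and D: "D \<in> Ob"
    and f: "aux_pair A B (f, E)" and g: "aux_pair B D (g, G)"
  defines "x \<equiv> (A, B, aux_class C A B (f, E))" and "y \<equiv> (B, D, aux_class C B D (g, G))"
  shows "aux_comp C (aux_rst C y) x = aux_comp C x (aux_rst C (aux_comp C y x))"
proof -
  define m where "m = assoc D G E \<cdot> ((g \<otimes> ide E) \<cdot> f)"
  have "aux_comp C y x = (A, D, aux_class C A D (m, G \<odot> E))"
    unfolding x_def y_def m_def using aux_comp_aux_class[OF A B D f g] by simp
  moreover have "aux_pair A D (m, G \<odot> E)"
    unfolding m_def using B D f g by simp
  ultimately have "aux_comp C x (aux_rst C (aux_comp C y x)) = (A, B, aux_class C A B (f \<cdot> r m, E))"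
    unfolding x_def using aux_rst_aux_class[of A D "(m, G \<odot> E)"] aux_comp_aux_rst[OF A B f, of m] by simp
  then show ?thesis
    unfolding x_def y_def aux_rst_aux_class[OF g] m_def
    using aux_comp_aux_class[OF A B B f, of "(runit_inv B \<cdot> r g, I)"]
      aux_class_aux_pair_comp_rst[OF B D f g] B g by simp
qed

lemma restriction_structure_aux:
  "restriction_structure (aux_arr C) aux_dom aux_cod (aux_comp C) (aux_rst C)"
  unfolding restriction_structure_def
proof (intro conjI ballI impI)
  fix x assume "x \<in> aux_arr C"
  then obtain A B f E where x: "x = (A, B, aux_class C A B (f, E))" and A: "A \<in> Ob" and B: "B \<in> Ob"
    and f: "aux_pair A B (f, E)" by (rule aux_arrE)
  have rst_x: "aux_rst C x = (A, A, aux_class C A A (runit_inv A \<cdot> r f, I))"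
    unfolding x using aux_rst_aux_class[OF f] by simp
  show "aux_rst C x \<in> aux_arr C"
    unfolding rst_x using aux_arrI A f by simp
  show "aux_dom (aux_rst C x) = aux_dom x" "aux_cod (aux_rst C x) = aux_dom x"
    using rst_x x unfolding aux_dom_def aux_cod_def by simp_all
  show "aux_comp C x (aux_rst C x) = x"
    using aux_comp_aux_rst[OF A B f] rst_x x f by simp
next
  fix x y assume "x \<in> aux_arr C" "y \<in> aux_arr C" and "aux_dom x = aux_dom y"
  then obtain A B f E B' g G where x: "x = (A, B, aux_class C A B (f, E))"
    and y: "y = (A, B', aux_class C A B' (g, G))"
    and A: "A \<in> Ob" and B': "B' \<in> Ob" and f: "aux_pair A B (f, E)" and g: "aux_pair A B' (g, G)"
    unfolding aux_dom_def by (elim aux_arrE) (simp only: fst_conv)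
  show "aux_comp C (aux_rst C x) (aux_rst C y) = aux_comp C (aux_rst C y) (aux_rst C x)"
    and "aux_rst C (aux_comp C y (aux_rst C x)) = aux_comp C (aux_rst C y) (aux_rst C x)"
    unfolding x y by (rule aux_rst_rst_comm[OF A f g], rule aux_rst_comp_rst[OF A B' f g])
next
  fix x y assume "x \<in> aux_arr C" "y \<in> aux_arr C" and "aux_dom y = aux_cod x"
  then obtain A B f E D g G where x: "x = (A, B, aux_class C A B (f, E))"
    and y: "y = (B, D, aux_class C B D (g, G))" and A: "A \<in> Ob" and B: "B \<in> Ob" and D: "D \<in> Ob"
    and f: "aux_pair A B (f, E)" and g: "aux_pair B D (g, G)"
    unfolding aux_dom_def aux_cod_def by (elim aux_arrE) (simp only: fst_conv snd_conv)
  show "aux_comp C (aux_rst C y) x = aux_comp C x (aux_rst C (aux_comp C y x))"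
    unfolding x y by (rule aux_rst_comp_swap[OF A B D f g])
qed

end

theorem proposition3p6:
  fixes C :: "('o, 'm) smrc"
  assumes "is_smrc C"
  shows "(\<forall>A\<in>obj C. \<forall>B\<in>obj C. \<forall>E\<in>obj C. \<forall>E'\<in>obj C. \<forall>f f'.
            f \<in> hom C A (tns C B E) \<longrightarrow> f' \<in> hom C A (tns C B E') \<longrightarrow>
            aux_sim C A B (f, E) (f', E') \<longrightarrow>
            aux_class C A A (cmp C (rui C A) (rst C f), unt C)
            = aux_class C A A (cmp C (rui C A) (rst C f'), unt C))
         \<and> restriction_structure (aux_arr C) aux_dom aux_cod (aux_comp C) (aux_rst C)"
proof -
  interpret sm_restriction_category C
    using assms by (rule sm_restriction_categoryI)
  have "rst C f = rst C f'"
    if "E \<in> obj C" "f \<in> hom C A (tns C B E)" "aux_sim C A B (f, E) (f', E')" for A B E E' f f'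
    using aux_sim_aux_pair[OF that(3)] that(1,2) unfolding hom_def by auto
  then show ?thesis
    using restriction_structure_aux by metis
qed

end
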